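(* Let $Q$ be a quadrilateral in $K^2$. (1) The midpoint $\mathrm{mid}_Q(\ell)$ is finite (not at infinity) for all bisectors $\ell$ of $Q$. (2) A line $\ell$ passing through a vertex of $Q$ bisects $Q$ if and only if it is a side of $Q$ or a diagonal of $Q$. (3) Two distinct parallel lines are bisectors of $Q$ if and only if these lines are parallel to a pair of parallel sides of $Q$ or to the diagonals of $Q$ when these are parallel. (4) All lines parallel to a pair of parallel sides of $Q$, or to the diagonals of $Q$ when these are parallel, bisect $Q$.
   Context: $K$ is a field of characteristic $\neq 2$; we work in $K^2$ inside the projective plane. A quadrilateral $Q=ABA'B'$ consists of four distinct lines $A,B,A',B'$ (sides), not all through one point, with adjacent sides ($A,B$; $B,A'$; $A',B'$; $B',A$) not parallel; opposite sides ($A,A'$; $B,B'$) may be parallel. Vertices: $A\cap B$, $B\cap A'$, $A'\cap B'$, $B'\cap A$ (two may coincide if three sides are concurrent). Diagonals: the lines through nonadjacent vertices. Here "parallel to" a line includes being equal to it. A line $\ell$ crosses a pair $\{\ell_1,\ell_2\}$ if it is distinct from both and not parallel to both; $\mathrm{mid}_{\{\ell_1,\ell_2\}}(\ell)$ is the midpoint of the points where $\ell$ meets $\ell_1,\ell_2$, defined to be the point at infinity of $\ell$ if one of these points is at infinity. $\ell$ bisects $Q$ (is a bisector of $Q$) if $\mathrm{mid}_{\mathsf P}(\ell)$ is the same for all pairs $\mathsf P$ among $\{A,A'\},\{B,B'\}$ that $\ell$ crosses; this common point is $\mathrm{mid}_Q(\ell)$, the midpoint of the bisector. *)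

theory Defs
  imports Main
begin

text \<open>Affine plane K^2 is modelled as the type 'k \<times> 'k for a field 'k.
  A line is the zero set of a x + b y = c with (a,b) \<noteq> (0,0).\<close>

definition is_line :: "('k::field \<times> 'k) set \<Rightarrow> bool" where
  "is_line L \<longleftrightarrow> (\<exists>a b c. (a \<noteq> 0 \<or> b \<noteq> 0) \<and> L = {p. a * fst p + b * snd p = c})"

text \<open>Direction of a line: the parallel line through the origin.\<close>
definition dir :: "('k::field \<times> 'k) set \<Rightarrow> ('k \<times> 'k) set" where
  "dir L = {(fst u - fst v, snd u - snd v) | u v. u \<in> L \<and> v \<in> L}"

text \<open>Parallel (includes equality).\<close>
definition parallel :: "('k::field \<times> 'k) set \<Rightarrow> ('k \<times> 'k) set \<Rightarrow> bool" where
  "parallel L M \<longleftrightarrow> dir L = dir M"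

text \<open>Points of the projective plane: finite points, or points at infinity
  (identified with a direction).\<close>
datatype 'k ppoint = Fin "'k \<times> 'k" | Infty "('k \<times> 'k) set"

definition meet :: "('k::field \<times> 'k) set \<Rightarrow> ('k \<times> 'k) set \<Rightarrow> 'k ppoint" where
  "meet l m = (if parallel l m then Infty (dir l) else Fin (THE p. p \<in> l \<and> p \<in> m))"

definition midpt :: "'k::field \<times> 'k \<Rightarrow> 'k \<times> 'k \<Rightarrow> 'k \<times> 'k" where
  "midpt p q = ((fst p + fst q) / 2, (snd p + snd q) / 2)"

definition mid :: "('k::field \<times> 'k) set \<Rightarrow> ('k \<times> 'k) set \<Rightarrow> ('k \<times> 'k) set \<Rightarrow> 'k ppoint" where
  "mid l l1 l2 = (case (meet l l1, meet l l2) of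
      (Fin p, Fin q) \<Rightarrow> Fin (midpt p q)
    | _ \<Rightarrow> Infty (dir l))"

definition crosses :: "('k::field \<times> 'k) set \<Rightarrow> ('k \<times> 'k) set \<Rightarrow> ('k \<times> 'k) set \<Rightarrow> bool" where
  "crosses l l1 l2 \<longleftrightarrow> l \<noteq> l1 \<and> l \<noteq> l2 \<and> \<not> (parallel l l1 \<and> parallel l l2)"

definition line_through :: "'k::field \<times> 'k \<Rightarrow> 'k \<times> 'k \<Rightarrow> ('k \<times> 'k) set" where
  "line_through p q = {r. \<exists>t. r = (fst p + t * (fst q - fst p), snd p + t * (snd q - snd p))}"

text \<open>Quadrilateral ABA'B' with sides A, B, A', B' (in this cyclic order).\<close>
definition quadrilateral :: "('k::field \<times> 'k) set \<Rightarrow> ('k \<times> 'k) set \<Rightarrow> ('k \<times> 'k) set \<Rightarrow> ('k \<times> 'k) set \<Rightarrow> bool" where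
  "quadrilateral A B A' B' \<longleftrightarrow>
     is_line A \<and> is_line B \<and> is_line A' \<and> is_line B' \<and>
     distinct [A, B, A', B'] \<and>
     \<not> (\<exists>p. p \<in> A \<and> p \<in> B \<and> p \<in> A' \<and> p \<in> B') \<and>
     \<not> parallel A B \<and> \<not> parallel B A' \<and> \<not> parallel A' B' \<and> \<not> parallel B' A"

definition vtx :: "('k::field \<times> 'k) set \<Rightarrow> ('k \<times> 'k) set \<Rightarrow> 'k \<times> 'k" where
  "vtx L M = (THE p. p \<in> L \<and> p \<in> M)"

definition vertices :: "('k::field \<times> 'k) set \<Rightarrow> ('k \<times> 'k) set \<Rightarrow> ('k \<times> 'k) set \<Rightarrow> ('k \<times> 'k) set \<Rightarrow> ('k \<times> 'k) set" where
  "vertices A B A' B' = {vtx A B, vtx B A', vtx A' B', vtx B' A}"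

definition diag1 :: "('k::field \<times> 'k) set \<Rightarrow> ('k \<times> 'k) set \<Rightarrow> ('k \<times> 'k) set \<Rightarrow> ('k \<times> 'k) set \<Rightarrow> ('k \<times> 'k) set" where
  "diag1 A B A' B' = line_through (vtx A B) (vtx A' B')"

definition diag2 :: "('k::field \<times> 'k) set \<Rightarrow> ('k \<times> 'k) set \<Rightarrow> ('k \<times> 'k) set \<Rightarrow> ('k \<times> 'k) set \<Rightarrow> ('k \<times> 'k) set" where
  "diag2 A B A' B' = line_through (vtx B A') (vtx B' A)"

definition bisects :: "('k::field \<times> 'k) set \<Rightarrow> ('k \<times> 'k) set \<Rightarrow> ('k \<times> 'k) set \<Rightarrow> ('k \<times> 'k) set \<Rightarrow> ('k \<times> 'k) set \<Rightarrow> bool" where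
  "bisects A B A' B' l \<longleftrightarrow> is_line l \<and>
     (crosses l A A' \<and> crosses l B B' \<longrightarrow> mid l A A' = mid l B B')"

definition midQ :: "('k::field \<times> 'k) set \<Rightarrow> ('k \<times> 'k) set \<Rightarrow> ('k \<times> 'k) set \<Rightarrow> ('k \<times> 'k) set \<Rightarrow> ('k \<times> 'k) set \<Rightarrow> 'k ppoint" where
  "midQ A B A' B' l = (if crosses l A A' then mid l A A' else mid l B B')"

end

(*
  A bisector l cannot be parallel to a side of a pair it crosses: it would then cross the other
  pair (adjacent sides are never parallel), where its midpoint is finite. A bisector through the
  vertex A \<inter> B meets A and B there, so equal midpoints force it to meet A' and B' in the same
  point, the opposite vertex: it is a diagonal. In a direction transversal to all sides, the
  points where the line a x + b y = t meets each side move affinely with t, so bisecting is an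
  affine condition on t. Hence two distinct parallel bisectors make every parallel line a
  bisector, in particular the two lines of that direction through A \<inter> B and B \<inter> A', which
  are then the diagonals. If instead the direction is that of a side, the crossing argument
  forces the opposite side to be parallel as well.
*)
theory Submission
  imports Defs
begin

abbreviation level_line :: "'k::field \<Rightarrow> 'k \<Rightarrow> 'k \<Rightarrow> ('k \<times> 'k) set" where
  "level_line a b c \<equiv> {p. a * fst p + b * snd p = c}"

lemma is_lineE:
  assumes "is_line L"
  obtains a b c where "a \<noteq> 0 \<or> b \<noteq> 0" "L = level_line a b c"
  using assms unfolding is_line_def by blast

lemma is_line_level_line: "(a::'k::field) \<noteq> 0 \<or> b \<noteq> 0 \<Longrightarrow> is_line (level_line a b c)"
  unfolding is_line_def by blast

lemma level_line_nonempty: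
  assumes "(a::'k::field) \<noteq> 0 \<or> b \<noteq> 0"
  obtains p where "p \<in> level_line a b c"
proof (cases "a = 0")
  case True
  then show ?thesis using assms that[of "(0, c / b)"] by simp
next
  case False
  then show ?thesis using that[of "(c / a, 0)"] by simp
qed

lemma kernel_eq_multiples:
  fixes a b x y :: "'k::field"
  assumes "a \<noteq> 0 \<or> b \<noteq> 0"
  shows "a * x + b * y = 0 \<longleftrightarrow> (\<exists>t. x = t * b \<and> y = - (t * a))"
proof
  assume xy: "a * x + b * y = 0"
  show "\<exists>t. x = t * b \<and> y = - (t * a)"
  proof (cases "a = 0")
    case True
    then show ?thesis using assms xy by (intro exI[of _ "x / b"]) auto
  next
    case False
    then show ?thesis using xy
      by (intro exI[of _ "- y / a"]) (auto simp: field_simps eq_neg_iff_add_eq_0)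
  qed
qed (auto simp: algebra_simps)

lemma dir_level_line:
  assumes "(a::'k::field) \<noteq> 0 \<or> b \<noteq> 0"
  shows "dir (level_line a b c) = level_line a b 0"
proof (intro set_eqI iffI)
  fix w assume "w \<in> dir (level_line a b c)"
  then show "w \<in> level_line a b 0"
    unfolding dir_def by (auto simp: algebra_simps)
next
  fix w assume w: "w \<in> level_line a b 0"
  obtain q where q: "q \<in> level_line a b c" using level_line_nonempty[OF assms] .
  have "(fst q + fst w, snd q + snd w) \<in> level_line a b c" using q w by (simp add: algebra_simps)
  with q show "w \<in> dir (level_line a b c)" unfolding dir_def by force
qed

lemma level_line_0_mono:
  fixes a b a' b' :: "'k::field"
  assumes ab: "a \<noteq> 0 \<or> b \<noteq> 0" and "a * b' = a' * b"
  shows "level_line a b 0 \<subseteq> level_line a' b' 0"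
proof
  fix w :: "'k \<times> 'k"
  assume w: "w \<in> level_line a b 0"
  have "a * (a' * fst w + b' * snd w) = a' * (a * fst w + b * snd w) + (a * b' - a' * b) * snd w"
    and "b * (a' * fst w + b' * snd w) = b' * (a * fst w + b * snd w) + (a' * b - a * b') * fst w"
    by (simp_all add: algebra_simps)
  moreover have "a * b' - a' * b = 0" "a' * b - a * b' = 0" using \<open>a * b' = a' * b\<close> by simp_all
  ultimately have "a * (a' * fst w + b' * snd w) = 0" "b * (a' * fst w + b' * snd w) = 0"
    using w by simp_all
  then show "w \<in> level_line a' b' 0" using ab by auto
qed

lemma parallel_level_line_iff:
  fixes a b c a' b' c' :: "'k::field"
  assumes ab: "a \<noteq> 0 \<or> b \<noteq> 0" and ab': "a' \<noteq> 0 \<or> b' \<noteq> 0"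
  shows "parallel (level_line a b c) (level_line a' b' c') \<longleftrightarrow> a * b' = a' * b"
proof
  assume "parallel (level_line a b c) (level_line a' b' c')"
  moreover have "(b, - a) \<in> level_line a b 0" by (simp add: algebra_simps)
  ultimately have "(b, - a) \<in> level_line a' b' 0"
    unfolding parallel_def dir_level_line[OF ab] dir_level_line[OF ab'] by simp
  then show "a * b' = a' * b" by (simp add: algebra_simps)
next
  assume "a * b' = a' * b"
  then have "level_line a b 0 = level_line a' b' 0"
    using level_line_0_mono[OF ab] level_line_0_mono[OF ab', where a'=a and b'=b]
    by (simp add: subset_antisym)
  then show "parallel (level_line a b c) (level_line a' b' c')"
    unfolding parallel_def dir_level_line[OF ab] dir_level_line[OF ab'] .
qed

lemma parallel_refl [simp]: "parallel L L"
  unfolding parallel_def by simp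

lemma parallel_sym: "parallel L M \<Longrightarrow> parallel M L"
  unfolding parallel_def by simp

lemma parallel_trans: "parallel L M \<Longrightarrow> parallel M N \<Longrightarrow> parallel L N"
  unfolding parallel_def by simp

lemma parallel_level_line: "(a::'k::field) \<noteq> 0 \<or> b \<noteq> 0 \<Longrightarrow> parallel (level_line a b c) (level_line a b c')"
  by (simp add: parallel_level_line_iff)

lemma mem_line_iff_dir:
  assumes "is_line L" "p \<in> L"
  shows "q \<in> L \<longleftrightarrow> (fst q - fst p, snd q - snd p) \<in> dir L"
proof -
  obtain a b c where ab: "a \<noteq> 0 \<or> b \<noteq> 0" and L: "L = level_line a b c"
    using assms(1) by (rule is_lineE)
  show ?thesis using assms(2) unfolding L dir_level_line[OF ab] by (auto simp: algebra_simps)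
qed

lemma parallel_lines_eq:
  assumes "is_line L" "is_line M" "parallel L M" "p \<in> L" "p \<in> M"
  shows "L = M"
  using mem_line_iff_dir[OF assms(1,4)] mem_line_iff_dir[OF assms(2,5)] assms(3)
  unfolding parallel_def by blast

lemma parallel_level_lineE:
  assumes ab: "(a::'k::field) \<noteq> 0 \<or> b \<noteq> 0" and M: "is_line M"
    and par: "parallel (level_line a b c) M"
  obtains c' where "M = level_line a b c'"
proof -
  obtain a' b' c' where ab': "a' \<noteq> 0 \<or> b' \<noteq> 0" and M': "M = level_line a' b' c'"
    using M by (rule is_lineE)
  obtain p where p: "p \<in> M" using level_line_nonempty[OF ab'] M' by blast
  define c'' where "c'' = a * fst p + b * snd p"
  have "parallel (level_line a b c'') M" using parallel_trans[OF parallel_level_line[OF ab] par] .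
  then have "level_line a b c'' = M"
    using parallel_lines_eq[OF is_line_level_line[OF ab] M] p unfolding c''_def by simp
  then show ?thesis using that by blast
qed

lemma line_through_eq:
  assumes "is_line L" "p \<noteq> q" "p \<in> L" "q \<in> L"
  shows "L = line_through p q"
proof -
  obtain a b c where ab: "a \<noteq> 0 \<or> b \<noteq> 0" and L: "L = level_line a b c"
    using assms(1) by (rule is_lineE)
  have diff_in_kernel: "a * (fst r - fst p) + b * (snd r - snd p) = 0 \<longleftrightarrow> r \<in> L" for r
    using assms(3) L by (auto simp: algebra_simps)
  obtain s where s: "fst q - fst p = s * b" "snd q - snd p = - (s * a)"
    using diff_in_kernel[of q] assms(4) kernel_eq_multiples[OF ab] by blast
  have "s \<noteq> 0" using s assms(2) by (auto simp: prod_eq_iff)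
  show ?thesis
  proof (intro set_eqI iffI)
    fix r assume "r \<in> L"
    then obtain u where "fst r - fst p = u * b" "snd r - snd p = - (u * a)"
      using diff_in_kernel[of r] kernel_eq_multiples[OF ab] by blast
    then have "r = (fst p + u * b, snd p + - (u * a))" by (simp add: prod_eq_iff algebra_simps)
    moreover have "(u / s) * (fst q - fst p) = u * b" "(u / s) * (snd q - snd p) = - (u * a)"
      unfolding s using \<open>s \<noteq> 0\<close> by simp_all
    ultimately have "r = (fst p + (u / s) * (fst q - fst p), snd p + (u / s) * (snd q - snd p))"
      by simp
    then show "r \<in> line_through p q" unfolding line_through_def by blast
  next
    fix r assume "r \<in> line_through p q"
    then obtain t where "r = (fst p + t * (fst q - fst p), snd p + t * (snd q - snd p))"
      unfolding line_through_def by blast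
    then show "r \<in> L" using diff_in_kernel[of r] s by (simp add: algebra_simps)
  qed
qed

lemma
  assumes "p \<noteq> q"
  shows is_line_line_through: "is_line (line_through p q)"
    and left_in_line_through: "p \<in> line_through p q"
    and right_in_line_through: "q \<in> line_through p q"
proof -
  define L where "L = level_line (snd q - snd p) (fst p - fst q)
    ((snd q - snd p) * fst p + (fst p - fst q) * snd p)"
  have ab: "snd q - snd p \<noteq> 0 \<or> fst p - fst q \<noteq> 0" using assms by (auto simp: prod_eq_iff)
  have L: "is_line L" "p \<in> L" "q \<in> L"
    unfolding L_def by (rule is_line_level_line[OF ab]) (auto simp: algebra_simps)
  then show "is_line (line_through p q)" "p \<in> line_through p q" "q \<in> line_through p q"
    using line_through_eq[OF L(1) assms L(2,3)] by simp_all
qed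

lemma line_through_commute: "line_through p q = line_through q p"
  by (metis line_through_eq is_line_line_through left_in_line_through right_in_line_through)

lemma common_point_unique:
  assumes "is_line L" "is_line M" "L \<noteq> M" "p \<in> L" "p \<in> M" "q \<in> L" "q \<in> M"
  shows "p = q"
  using line_through_eq[OF assms(1) _ assms(4,6)] line_through_eq[OF assms(2) _ assms(5,7)] assms(3)
  by blast

lemma ex_common_point:
  fixes L M :: "('k::field \<times> 'k) set"
  assumes "is_line L" "is_line M" "\<not> parallel L M"
  shows "\<exists>p. p \<in> L \<and> p \<in> M"
proof -
  obtain a b c where ab: "a \<noteq> 0 \<or> b \<noteq> 0" and L: "L = level_line a b c"
    using assms(1) by (rule is_lineE)
  obtain a' b' c' where ab': "a' \<noteq> 0 \<or> b' \<noteq> 0" and M: "M = level_line a' b' c'"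
    using assms(2) by (rule is_lineE)
  define D where "D = a * b' - a' * b"
  have D: "D \<noteq> 0" using assms(3) parallel_level_line_iff[OF ab ab'] L M unfolding D_def by simp
  \<comment> \<open>Cramer's rule\<close>
  have "u * ((c * b' - c' * b) / D) + v * ((a * c' - a' * c) / D)
      = (u * (c * b' - c' * b) + v * (a * c' - a' * c)) / D" for u v
    by (simp add: add_divide_distrib)
  moreover have "a * (c * b' - c' * b) + b * (a * c' - a' * c) = c * D"
    and "a' * (c * b' - c' * b) + b' * (a * c' - a' * c) = c' * D"
    unfolding D_def by (simp_all add: algebra_simps)
  ultimately have "((c * b' - c' * b) / D, (a * c' - a' * c) / D) \<in> L \<inter> M"
    unfolding L M using D by simp
  then show ?thesis by blast
qed

lemma ex1_common_point:
  assumes "is_line L" "is_line M" "\<not> parallel L M"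
  shows "\<exists>!p. p \<in> L \<and> p \<in> M"
  using ex_common_point[OF assms] common_point_unique[OF assms(1,2)] assms(3) by force

lemma ex_parallel_through:
  assumes "is_line l"
  obtains m where "is_line m" "parallel m l" "p \<in> m"
proof -
  obtain a b c where ab: "a \<noteq> 0 \<or> b \<noteq> 0" and l: "l = level_line a b c"
    using assms by (rule is_lineE)
  show ?thesis
    using that[of "level_line a b (a * fst p + b * snd p)"] is_line_level_line[OF ab]
      parallel_level_line[OF ab] l by simp
qed

lemma vtx_eq:
  assumes "is_line L" "is_line M" "\<not> parallel L M" "p \<in> L" "p \<in> M"
  shows "vtx L M = p"
  unfolding vtx_def using ex1_common_point[OF assms(1-3)] assms(4,5) by blast

lemma
  assumes "is_line L" "is_line M" "\<not> parallel L M"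
  shows vtx_mem_left: "vtx L M \<in> L" and vtx_mem_right: "vtx L M \<in> M"
  using vtx_eq[OF assms] ex_common_point[OF assms] by auto

lemma vtx_commute: "vtx L M = vtx M L"
  unfolding vtx_def by (simp add: conj_commute)

lemma mid_eq_Fin:
  assumes "is_line l" "is_line L" "is_line M" "\<not> parallel l L" "\<not> parallel l M"
    and "p \<in> l \<inter> L" "q \<in> l \<inter> M"
  shows "mid l L M = Fin (midpt p q)"
  using assms vtx_eq[of l L p] vtx_eq[of l M q] unfolding mid_def meet_def vtx_def by simp

lemma mid_parallel: "parallel l L \<or> parallel l M \<Longrightarrow> mid l L M = Infty (dir l)"
  unfolding mid_def meet_def by auto

lemma mid_commute: "mid l L M = mid l M L"
  unfolding mid_def midpt_def by (auto split: ppoint.split simp: add.commute)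

lemma mid_finite_iff:
  assumes "is_line l" "is_line L" "is_line M"
  shows "(\<exists>p. mid l L M = Fin p) \<longleftrightarrow> \<not> parallel l L \<and> \<not> parallel l M"
proof
  assume "\<not> parallel l L \<and> \<not> parallel l M"
  with assms show "\<exists>p. mid l L M = Fin p"
    using ex_common_point[of l L] ex_common_point[of l M] mid_eq_Fin by (metis IntI)
next
  assume "\<exists>p. mid l L M = Fin p"
  then show "\<not> parallel l L \<and> \<not> parallel l M" using mid_parallel[of l L M] by auto
qed

lemma midpt_eq_iff:
  assumes "(2::'k::field) \<noteq> 0"
  shows "midpt p q = midpt p' (q'::'k \<times> 'k) \<longleftrightarrow>
    fst p + fst q = fst p' + fst q' \<and> snd p + snd q = snd p' + snd q'"
  unfolding midpt_def
  by (simp only: prod_eq_iff fst_conv snd_conv divide_cancel_right assms simp_thms)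

lemma midpt_left_cancel:
  assumes "(2::'k::field) \<noteq> 0" "midpt p q = midpt p (q'::'k \<times> 'k)"
  shows "q = q'"
  using assms(2) unfolding midpt_eq_iff[OF assms(1)] by (simp add: prod_eq_iff)

lemma crosses_commute: "crosses l L M = crosses l M L"
  unfolding crosses_def by auto

lemma not_parallel_level_line:
  assumes "(a::'k::field) \<noteq> 0 \<or> b \<noteq> 0" "\<not> parallel (level_line a b c) X"
  shows "\<not> parallel (level_line a b c') X"
  using assms parallel_trans[OF parallel_level_line[OF assms(1)]] by blast

lemma level_line_meets_affinely:
  assumes X: "is_line X" and ab: "(a::'k::field) \<noteq> 0 \<or> b \<noteq> 0"
    and np: "\<not> parallel (level_line a b c) X"
  obtains x u y v where "\<And>t. (x + t * u, y + t * v) \<in> level_line a b t \<inter> X"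
proof -
  have np': "\<not> parallel (level_line a b t) X" for t
    using not_parallel_level_line[OF ab np] .
  obtain p where p: "p \<in> level_line a b 0" "p \<in> X"
    using ex_common_point[OF is_line_level_line[OF ab] X np'] by blast
  obtain q where q: "q \<in> level_line a b 1" "q \<in> X"
    using ex_common_point[OF is_line_level_line[OF ab] X np'] by blast
  have "p \<noteq> q" using p q by auto
  then have "X = line_through p q" using line_through_eq[OF X] p q by blast
  moreover have "a * (fst p + t * (fst q - fst p)) + b * (snd p + t * (snd q - snd p))
      = (a * fst p + b * snd p) + t * ((a * fst q + b * snd q) - (a * fst p + b * snd p))" for t
    by (simp add: algebra_simps)
  ultimately show ?thesis
    using that[of "fst p" "fst q - fst p" "snd p" "snd q - snd p"] p q
    unfolding line_through_def by auto
qed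

lemma affine_zero_at_two_points:
  fixes m k :: "'k::field"
  assumes "m + s * k = 0" "m + t * k = 0" "s \<noteq> t"
  shows "m + u * k = 0"
proof -
  have "(s - t) * k = (m + s * k) - (m + t * k)" by (simp add: algebra_simps)
  then have "k = 0" using assms by simp
  then show ?thesis using assms(1) by simp
qed

lemma affine_sum_eq_iff:
  fixes r :: "'k::field"
  shows "(x1 + r * u1) + (x2 + r * u2) = (x3 + r * u3) + (x4 + r * u4) \<longleftrightarrow>
    (x1 + x2 - x3 - x4) + r * (u1 + u2 - u3 - u4) = 0"
proof -
  have "(x1 + r * u1) + (x2 + r * u2) - ((x3 + r * u3) + (x4 + r * u4))
      = (x1 + x2 - x3 - x4) + r * (u1 + u2 - u3 - u4)"
    by (simp add: algebra_simps)
  then show ?thesis by (metis eq_iff_diff_eq_0)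
qed

lemma bisects_level_line_family:
  fixes a b s t u :: "'k::field"
  assumes lines: "is_line A" "is_line B" "is_line A'" "is_line B'" and two: "(2::'k) \<noteq> 0"
    and ab: "a \<noteq> 0 \<or> b \<noteq> 0"
    and transversal: "\<forall>X \<in> {A, B, A', B'}. \<not> parallel (level_line a b s) X"
    and bisects_s: "bisects A B A' B' (level_line a b s)"
    and bisects_t: "bisects A B A' B' (level_line a b t)" and "s \<noteq> t"
  shows "bisects A B A' B' (level_line a b u)"
proof -
  have np: "\<not> parallel (level_line a b r) A" "\<not> parallel (level_line a b r) B"
    "\<not> parallel (level_line a b r) A'" "\<not> parallel (level_line a b r) B'" for r
    using not_parallel_level_line[OF ab] transversal by blast+
  obtain xA uA yA vA where PA: "\<And>r. (xA + r * uA, yA + r * vA) \<in> level_line a b r \<inter> A"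
    using level_line_meets_affinely[OF lines(1) ab np(1)] by blast
  obtain xB uB yB vB where PB: "\<And>r. (xB + r * uB, yB + r * vB) \<in> level_line a b r \<inter> B"
    using level_line_meets_affinely[OF lines(2) ab np(2)] by blast
  obtain xA' uA' yA' vA' where PA': "\<And>r. (xA' + r * uA', yA' + r * vA') \<in> level_line a b r \<inter> A'"
    using level_line_meets_affinely[OF lines(3) ab np(3)] by blast
  obtain xB' uB' yB' vB' where PB': "\<And>r. (xB' + r * uB', yB' + r * vB') \<in> level_line a b r \<inter> B'"
    using level_line_meets_affinely[OF lines(4) ab np(4)] by blast
  have "crosses (level_line a b r) A A' \<and> crosses (level_line a b r) B B'" for r
    using np[of r] unfolding crosses_def by auto
  then have "bisects A B A' B' (level_line a b r) \<longleftrightarrow>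
      midpt (xA + r * uA, yA + r * vA) (xA' + r * uA', yA' + r * vA')
      = midpt (xB + r * uB, yB + r * vB) (xB' + r * uB', yB' + r * vB')" for r
    unfolding bisects_def
    using mid_eq_Fin[OF is_line_level_line[OF ab] lines(1,3) np(1,3) PA PA']
      mid_eq_Fin[OF is_line_level_line[OF ab] lines(2,4) np(2,4) PB PB'] is_line_level_line[OF ab]
    by simp
  then have bisects_iff: "bisects A B A' B' (level_line a b r) \<longleftrightarrow>
      (xA + xA' - xB - xB') + r * (uA + uA' - uB - uB') = 0 \<and>
      (yA + yA' - yB - yB') + r * (vA + vA' - vB - vB') = 0" for r
    by (simp only: midpt_eq_iff[OF two] fst_conv snd_conv affine_sum_eq_iff)
  have "m + u * k = 0" if "m + s * k = 0" "m + t * k = 0" for m k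
    using affine_zero_at_two_points[OF that \<open>s \<noteq> t\<close>] .
  then show ?thesis using bisects_s bisects_t unfolding bisects_iff by blast
qed

lemma bisects_parallel_family:
  assumes lines: "is_line A" "is_line B" "is_line A'" "is_line B'" and two: "(2::'k::field) \<noteq> 0"
    and l1: "is_line (l1 :: ('k \<times> 'k) set)" and l2: "is_line l2" and "l1 \<noteq> l2" "parallel l1 l2"
    and transversal: "\<forall>X \<in> {A, B, A', B'}. \<not> parallel l1 X"
    and "bisects A B A' B' l1" "bisects A B A' B' l2"
    and l: "is_line l" "parallel l l1"
  shows "bisects A B A' B' l"
proof -
  obtain a b c1 where ab: "a \<noteq> 0 \<or> b \<noteq> 0" and c1: "l1 = level_line a b c1"
    using l1 by (rule is_lineE)
  obtain c2 where c2: "l2 = level_line a b c2"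
    using parallel_level_lineE[OF ab l2] \<open>parallel l1 l2\<close> c1 by blast
  obtain c where c: "l = level_line a b c"
    using parallel_level_lineE[OF ab l(1)] parallel_sym[OF l(2)] c1 by blast
  show ?thesis
    using bisects_level_line_family[OF lines two ab, of c1 c2 c] assms c1 c2 c by blast
qed

lemma quadrilateral_is_line:
  assumes "quadrilateral A B A' B'"
  shows "is_line A" "is_line B" "is_line A'" "is_line B'"
  using assms unfolding quadrilateral_def by simp_all

lemma quadrilateral_not_parallel:
  assumes "quadrilateral A B A' B'"
  shows "\<not> parallel A B" "\<not> parallel B A" "\<not> parallel B A'" "\<not> parallel A' B"
    "\<not> parallel A' B'" "\<not> parallel B' A'" "\<not> parallel B' A" "\<not> parallel A B'"
  using assms unfolding quadrilateral_def by (auto dest: parallel_sym)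

lemma quadrilateral_opposite_ne:
  assumes "quadrilateral A B A' B'"
  shows "A \<noteq> A'" "B \<noteq> B'"
  using assms unfolding quadrilateral_def by simp_all

lemma quadrilateral_no_common_point:
  assumes "quadrilateral A B A' B'" "p \<in> A" "p \<in> B" "p \<in> A'" "p \<in> B'"
  shows False
  using assms unfolding quadrilateral_def by blast

lemma quadrilateral_rotate: "quadrilateral A B A' B' \<Longrightarrow> quadrilateral B A' B' A"
  unfolding quadrilateral_def by auto

lemma quadrilateral_reflect: "quadrilateral A B A' B' \<Longrightarrow> quadrilateral B A B' A'"
  unfolding quadrilateral_def by (auto dest: parallel_sym)

lemma quadrilateral_swap: "quadrilateral A B A' B' \<Longrightarrow> quadrilateral A' B A B'"
  unfolding quadrilateral_def by (auto dest: parallel_sym)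

lemma bisects_swap: "bisects A' B A B' l = bisects A B A' B' l"
  unfolding bisects_def by (auto simp: crosses_commute mid_commute)

lemma bisects_rotate: "bisects B A' B' A l = bisects A B A' B' l"
  unfolding bisects_def by (auto simp: crosses_commute mid_commute)

lemma bisects_reflect: "bisects B A B' A' l = bisects A B A' B' l"
  unfolding bisects_def by auto

lemma diag_rotate: "diag1 B A' B' A = diag2 A B A' B'" "diag2 B A' B' A = diag1 A B A' B'"
  unfolding diag1_def diag2_def by (simp_all add: line_through_commute)

lemma vtx_mem_sides:
  assumes "quadrilateral A B A' B'"
  shows "vtx A B \<in> A" "vtx A B \<in> B"
  using vtx_mem_left vtx_mem_right quadrilateral_is_line[OF assms] quadrilateral_not_parallel[OF assms]
  by auto

lemma opposite_vertices_ne: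
  assumes "quadrilateral A B A' B'"
  shows "vtx A B \<noteq> vtx A' B'"
  using vtx_mem_sides[OF assms] vtx_mem_sides[OF quadrilateral_rotate[OF quadrilateral_rotate[OF assms]]]
    quadrilateral_no_common_point[OF assms] by metis

lemma diag1_through_vertices:
  assumes "quadrilateral A B A' B'"
  shows "is_line (diag1 A B A' B')" "vtx A B \<in> diag1 A B A' B'" "vtx A' B' \<in> diag1 A B A' B'"
  unfolding diag1_def using opposite_vertices_ne[OF assms]
  by (simp_all add: is_line_line_through left_in_line_through right_in_line_through)

lemma bisects_is_line: "bisects A B A' B' l \<Longrightarrow> is_line l"
  unfolding bisects_def by simp

lemma bisects_crosses_not_parallel:
  assumes Q: "quadrilateral A B A' B'" and bis: "bisects A B A' B' l" and cross: "crosses l A A'"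
  shows "\<not> parallel l A"
proof
  assume par: "parallel l A"
  have "\<not> parallel l B" "\<not> parallel l B'"
    using quadrilateral_not_parallel[OF Q] parallel_trans[OF parallel_sym[OF par]] by blast+
  then have "crosses l B B'" unfolding crosses_def by auto
  then have "mid l A A' = mid l B B'" using bis cross unfolding bisects_def by simp
  moreover have "mid l A A' = Infty (dir l)" using mid_parallel par by blast
  moreover obtain p where "mid l B B' = Fin p"
    using mid_finite_iff[OF bisects_is_line[OF bis] quadrilateral_is_line(2,4)[OF Q]]
      \<open>\<not> parallel l B\<close> \<open>\<not> parallel l B'\<close> by blast
  ultimately show False by simp
qed

lemma bisects_crossesD:
  assumes Q: "quadrilateral A B A' B'" and bis: "bisects A B A' B' l"
  shows "crosses l A A' \<Longrightarrow> \<not> parallel l A \<and> \<not> parallel l A'"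
    and "crosses l B B' \<Longrightarrow> \<not> parallel l B \<and> \<not> parallel l B'"
proof -
  have first_pair: "\<not> parallel l A \<and> \<not> parallel l A'"
    if "quadrilateral A B A' B'" "bisects A B A' B' l" "crosses l A A'" for A B A' B'
    using bisects_crosses_not_parallel[OF that]
      bisects_crosses_not_parallel[OF quadrilateral_swap[OF that(1)]] that(2,3)
    by (simp add: bisects_swap crosses_commute)
  show "crosses l A A' \<Longrightarrow> \<not> parallel l A \<and> \<not> parallel l A'"
    using first_pair[OF Q bis] .
  show "crosses l B B' \<Longrightarrow> \<not> parallel l B \<and> \<not> parallel l B'"
    using first_pair[OF quadrilateral_reflect[OF Q] bisects_reflect[THEN iffD2, OF bis]] .
qed

lemma bisects_midQ_finite:
  assumes Q: "quadrilateral A B A' B'" and bis: "bisects A B A' B' l"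
  shows "\<exists>p. midQ A B A' B' l = Fin p"
proof (cases "crosses l A A'")
  case True
  then show ?thesis
    using bisects_crossesD(1)[OF Q bis] mid_finite_iff[OF bisects_is_line[OF bis]]
      quadrilateral_is_line[OF Q] unfolding midQ_def by simp
next
  case False
  then have "parallel l A \<or> parallel l A'" unfolding crosses_def by auto
  then have "\<not> parallel l B \<and> \<not> parallel l B'"
    using quadrilateral_not_parallel[OF Q] by (metis parallel_sym parallel_trans)
  then show ?thesis
    using False mid_finite_iff[OF bisects_is_line[OF bis]] quadrilateral_is_line[OF Q]
    unfolding midQ_def by simp
qed

lemma bisects_through_vertex:
  assumes Q: "quadrilateral A B A' B'" and two: "(2::'k::field) \<noteq> 0"
    and bis: "bisects A B A' B' (l :: ('k \<times> 'k) set)" and v: "vtx A B \<in> l"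
  shows "l \<in> {A, B, A', B', diag1 A B A' B'}"
proof (rule ccontr)
  assume other: "l \<notin> {A, B, A', B', diag1 A B A' B'}"
  note sides = quadrilateral_is_line[OF Q]
  have l: "is_line l" using bisects_is_line[OF bis] .
  have v_sides: "vtx A B \<in> l \<inter> A" "vtx A B \<in> l \<inter> B" using v vtx_mem_sides[OF Q] by auto
  have nA: "\<not> parallel l A" and nB: "\<not> parallel l B"
    using parallel_lines_eq[OF l sides(1)] parallel_lines_eq[OF l sides(2)] v_sides other by blast+
  then have cross: "crosses l A A'" "crosses l B B'" using other unfolding crosses_def by auto
  then have nA': "\<not> parallel l A'" and nB': "\<not> parallel l B'"
    using bisects_crossesD[OF Q bis] by auto
  then obtain X Y where X: "X \<in> l \<inter> A'" and Y: "Y \<in> l \<inter> B'"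
    using ex_common_point[OF l sides(3)] ex_common_point[OF l sides(4)] by blast
  have "Fin (midpt (vtx A B) X) = Fin (midpt (vtx A B) Y)"
    using bis cross mid_eq_Fin[OF l sides(1,3) nA nA' v_sides(1) X]
      mid_eq_Fin[OF l sides(2,4) nB nB' v_sides(2) Y] unfolding bisects_def by simp
  then have "X = Y" using midpt_left_cancel[OF two] by simp
  then have "X = vtx A' B'"
    using vtx_eq[OF sides(3,4) quadrilateral_not_parallel(5)[OF Q]] X Y by blast
  then have "l = diag1 A B A' B'"
    using line_through_eq[OF l opposite_vertices_ne[OF Q] v] X unfolding diag1_def by blast
  then show False using other by simp
qed

lemma bisects_through_meeting_points:
  assumes lines: "is_line A" "is_line B" "is_line A'" "is_line B'" "is_line d"
    and P: "P \<in> d \<inter> A \<inter> B" and R: "R \<in> d \<inter> A' \<inter> B'"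
  shows "bisects A B A' B' d"
  unfolding bisects_def
proof (intro conjI impI)
  assume "crosses d A A' \<and> crosses d B B'"
  then have nA: "\<not> parallel d A" and nB: "\<not> parallel d B"
    and nA': "\<not> parallel d A'" and nB': "\<not> parallel d B'"
    using parallel_lines_eq[OF lines(5)] lines P R unfolding crosses_def by blast+
  have "mid d A A' = Fin (midpt P R)"
    by (rule mid_eq_Fin[OF lines(5,1,3) nA nA']) (use P R in auto)
  moreover have "mid d B B' = Fin (midpt P R)"
    by (rule mid_eq_Fin[OF lines(5,2,4) nB nB']) (use P R in auto)
  ultimately show "mid d A A' = mid d B B'" by simp
qed (rule lines(5))

lemma bisects_diag1:
  assumes Q: "quadrilateral A B A' B'"
  shows "bisects A B A' B' (diag1 A B A' B')"
proof (rule bisects_through_meeting_points)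
  show "vtx A B \<in> diag1 A B A' B' \<inter> A \<inter> B"
    using diag1_through_vertices(2)[OF Q] vtx_mem_sides[OF Q] by blast
  show "vtx A' B' \<in> diag1 A B A' B' \<inter> A' \<inter> B'"
    using diag1_through_vertices(3)[OF Q] vtx_mem_sides[OF quadrilateral_rotate[OF quadrilateral_rotate[OF Q]]]
    by blast
qed (simp_all add: quadrilateral_is_line[OF Q] diag1_through_vertices(1)[OF Q])

lemma bisects_diag2: "quadrilateral A B A' B' \<Longrightarrow> bisects A B A' B' (diag2 A B A' B')"
  by (metis bisects_diag1 quadrilateral_rotate bisects_rotate diag_rotate(1))

lemma bisects_side:
  assumes "quadrilateral A B A' B'" "l \<in> {A, B, A', B'}"
  shows "bisects A B A' B' l"
  using assms quadrilateral_is_line[OF assms(1)] unfolding bisects_def crosses_def by auto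

lemma diag2_through_vertices:
  assumes "quadrilateral A B A' B'"
  shows "is_line (diag2 A B A' B')" "vtx B A' \<in> diag2 A B A' B'" "vtx B' A \<in> diag2 A B A' B'"
  using diag1_through_vertices[OF quadrilateral_rotate[OF assms]] unfolding diag_rotate(1) .

lemma bisects_through_vertex_iff:
  assumes Q: "quadrilateral A B A' B'" and two: "(2::'k::field) \<noteq> 0"
    and l: "is_line (l :: ('k \<times> 'k) set)" and v: "\<exists>v \<in> vertices A B A' B'. v \<in> l"
  shows "bisects A B A' B' l \<longleftrightarrow> l \<in> {A, B, A', B', diag1 A B A' B', diag2 A B A' B'}"
proof
  assume "l \<in> {A, B, A', B', diag1 A B A' B', diag2 A B A' B'}"
  then show "bisects A B A' B' l"
    using bisects_side[OF Q] bisects_diag1[OF Q] bisects_diag2[OF Q] by blast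
next
  assume bis: "bisects A B A' B' l"
  have Q1: "quadrilateral B A' B' A" using quadrilateral_rotate[OF Q] .
  have Q2: "quadrilateral A' B' A B" using quadrilateral_rotate[OF Q1] .
  have Q3: "quadrilateral B' A B A'" using quadrilateral_rotate[OF Q2] .
  have bis1: "bisects B A' B' A l" and bis2: "bisects A' B' A B l" and bis3: "bisects B' A B A' l"
    using bis bisects_rotate by blast+
  have diags: "diag1 B A' B' A = diag2 A B A' B'" "diag1 A' B' A B = diag1 A B A' B'"
    "diag1 B' A B A' = diag2 A B A' B'"
    unfolding diag1_def diag2_def by (simp_all add: line_through_commute)
  from v consider "vtx A B \<in> l" | "vtx B A' \<in> l" | "vtx A' B' \<in> l" | "vtx B' A \<in> l"
    unfolding vertices_def by blast
  then show "l \<in> {A, B, A', B', diag1 A B A' B', diag2 A B A' B'}"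
  proof cases
    case 1
    then show ?thesis using bisects_through_vertex[OF Q two bis] by blast
  next
    case 2
    then show ?thesis using bisects_through_vertex[OF Q1 two bis1] diags(1) by auto
  next
    case 3
    then show ?thesis using bisects_through_vertex[OF Q2 two bis2] diags(2) by auto
  next
    case 4
    then show ?thesis using bisects_through_vertex[OF Q3 two bis3] diags(3) by auto
  qed
qed

lemma diag1_not_parallel_A:
  assumes Q: "quadrilateral A B A' B'"
    and dd: "parallel (diag1 A B A' B') (diag2 A B A' B')"
  shows "\<not> parallel (diag1 A B A' B') A"
proof
  assume par: "parallel (diag1 A B A' B') A"
  note sides = quadrilateral_is_line[OF Q]
  have Q2: "quadrilateral A' B' A B" using quadrilateral_rotate[OF quadrilateral_rotate[OF Q]] .
  have d1: "diag1 A B A' B' = A"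
    using parallel_lines_eq[OF diag1_through_vertices(1)[OF Q] sides(1) par]
      diag1_through_vertices(2)[OF Q] vtx_mem_sides[OF Q] by blast
  have "parallel (diag2 A B A' B') A" using parallel_trans[OF parallel_sym[OF dd] par] .
  then have d2: "diag2 A B A' B' = A"
    using parallel_lines_eq[OF diag2_through_vertices(1)[OF Q] sides(1)]
      diag2_through_vertices(3)[OF Q] vtx_mem_sides[OF quadrilateral_rotate[OF Q2]] by blast
  have "vtx B A' \<in> A \<inter> A' \<inter> B" "vtx A' B' \<in> A \<inter> A' \<inter> B'"
    using d1 d2 diag1_through_vertices(3)[OF Q] diag2_through_vertices(2)[OF Q]
      vtx_mem_sides[OF quadrilateral_rotate[OF Q]] vtx_mem_sides[OF Q2] by auto
  moreover have "vtx B A' = vtx A' B'"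
    using common_point_unique[OF sides(1,3) quadrilateral_opposite_ne(1)[OF Q]] calculation by blast
  ultimately show False using quadrilateral_no_common_point[OF Q, of "vtx A' B'"] by auto
qed

lemma diag1_not_parallel_sides:
  assumes Q: "quadrilateral A B A' B'"
    and dd: "parallel (diag1 A B A' B') (diag2 A B A' B')"
  shows "\<forall>X \<in> {A, B, A', B'}. \<not> parallel (diag1 A B A' B') X"
proof -
  have Q2: "quadrilateral A' B' A B" using quadrilateral_rotate[OF quadrilateral_rotate[OF Q]] .
  have diags: "diag1 B A B' A' = diag1 A B A' B'" "diag2 B A B' A' = diag2 A B A' B'"
    "diag1 A' B' A B = diag1 A B A' B'" "diag2 A' B' A B = diag2 A B A' B'"
    "diag1 B' A' B A = diag1 A B A' B'" "diag2 B' A' B A = diag2 A B A' B'"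
    unfolding diag1_def diag2_def by (simp_all add: line_through_commute vtx_commute)
  show ?thesis
    using diag1_not_parallel_A[OF Q dd]
      diag1_not_parallel_A[OF quadrilateral_reflect[OF Q], unfolded diags, OF dd]
      diag1_not_parallel_A[OF Q2, unfolded diags, OF dd]
      diag1_not_parallel_A[OF quadrilateral_reflect[OF Q2], unfolded diags, OF dd]
    by blast
qed

lemma diag1_ne_diag2:
  assumes Q: "quadrilateral A B A' B'"
    and dd: "parallel (diag1 A B A' B') (diag2 A B A' B')"
  shows "diag1 A B A' B' \<noteq> diag2 A B A' B'"
proof
  assume eq: "diag1 A B A' B' = diag2 A B A' B'"
  note sides = quadrilateral_is_line[OF Q]
  note d = diag1_through_vertices[OF Q] diag2_through_vertices[OF Q, folded eq]
  have Q1: "quadrilateral B A' B' A" using quadrilateral_rotate[OF Q] .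
  have ne: "diag1 A B A' B' \<noteq> A" "diag1 A B A' B' \<noteq> B"
    using diag1_not_parallel_sides[OF Q dd] by auto
  have Q3: "quadrilateral B' A B A'" using quadrilateral_rotate[OF quadrilateral_rotate[OF Q1]] .
  have "vtx A B = vtx B A'"
    using common_point_unique[OF d(1) sides(2) ne(2)] d vtx_mem_sides[OF Q] vtx_mem_sides[OF Q1]
    by blast
  then have "vtx A B \<in> A'" using vtx_mem_sides(2)[OF Q1] by simp
  have "vtx A B = vtx B' A"
    using common_point_unique[OF d(1) sides(1) ne(1)] d vtx_mem_sides[OF Q] vtx_mem_sides[OF Q3]
    by blast
  then have "vtx A B \<in> B'" using vtx_mem_sides(1)[OF Q3] by simp
  show False
    by (rule quadrilateral_no_common_point[OF Q vtx_mem_sides[OF Q]]) fact+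
qed

lemma bisects_if_parallel_to_parallel_pair:
  assumes Q: "quadrilateral A B A' B'" and two: "(2::'k::field) \<noteq> 0"
    and l: "is_line (l :: ('k \<times> 'k) set)"
    and pair: "(parallel A A' \<and> parallel l A) \<or> (parallel B B' \<and> parallel l B) \<or>
      (parallel (diag1 A B A' B') (diag2 A B A' B') \<and> parallel l (diag1 A B A' B'))"
  shows "bisects A B A' B' l"
proof -
  consider "parallel A A' \<and> parallel l A" | "parallel B B' \<and> parallel l B"
    | "parallel (diag1 A B A' B') (diag2 A B A' B')" "parallel l (diag1 A B A' B')"
    using pair by blast
  then show ?thesis
  proof cases
    case 3
    then show ?thesis
      using bisects_parallel_family[OF quadrilateral_is_line[OF Q] two
          diag1_through_vertices(1)[OF Q] diag2_through_vertices(1)[OF Q]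
          diag1_ne_diag2[OF Q] _ diag1_not_parallel_sides[OF Q]
          bisects_diag1[OF Q] bisects_diag2[OF Q] l]
      by blast
  qed (use l in \<open>auto simp: bisects_def crosses_def parallel_def\<close>)
qed

lemma bisects_parallel_to_side:
  assumes Q: "quadrilateral A B A' B'" and bis: "bisects A B A' B' l"
    and "parallel l A" "l \<noteq> A"
  shows "parallel A A'"
proof (rule ccontr)
  assume "\<not> parallel A A'"
  then have "\<not> parallel l A'" "l \<noteq> A'"
    using \<open>parallel l A\<close> by (auto simp: parallel_def)
  then have "crosses l A A'" using \<open>l \<noteq> A\<close> unfolding crosses_def by blast
  then show False using bisects_crossesD(1)[OF Q bis] \<open>parallel l A\<close> by blast
qed

lemma parallel_bisectors_parallel_to_side:
  assumes Q: "quadrilateral A B A' B'"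
    and "bisects A B A' B' l1" "bisects A B A' B' l2" "l1 \<noteq> l2" "parallel l1 l2"
    and "parallel l1 A"
  shows "parallel A A'"
proof -
  obtain l where "l \<in> {l1, l2}" "l \<noteq> A" using \<open>l1 \<noteq> l2\<close> by blast
  moreover have "parallel l A" using calculation assms(5,6) by (auto simp: parallel_def)
  ultimately show ?thesis using bisects_parallel_to_side[OF Q] assms(2,3) by blast
qed

lemma transversal_parallel_bisectors_parallel_diag1:
  assumes Q: "quadrilateral A B A' B'" and two: "(2::'k::field) \<noteq> 0"
    and l1: "is_line (l1 :: ('k \<times> 'k) set)" and l2: "is_line l2" and "l1 \<noteq> l2" "parallel l1 l2"
    and transversal: "\<forall>X \<in> {A, B, A', B'}. \<not> parallel l1 X"
    and "bisects A B A' B' l1" "bisects A B A' B' l2"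
  shows "parallel l1 (diag1 A B A' B')"
proof -
  obtain m where m: "is_line m" "parallel m l1" "vtx A B \<in> m"
    using ex_parallel_through[OF l1] by blast
  have "bisects A B A' B' m"
    using bisects_parallel_family[OF quadrilateral_is_line[OF Q] two l1 l2] assms m by blast
  moreover have "m \<notin> {A, B, A', B'}"
    using transversal m(2) by (auto simp: parallel_def)
  ultimately have "m = diag1 A B A' B'" using bisects_through_vertex[OF Q two _ m(3)] by blast
  then show ?thesis using parallel_sym[OF m(2)] by simp
qed

lemma parallel_bisectors_parallel_to_side_pair:
  assumes Q: "quadrilateral A B A' B'"
    and bis: "bisects A B A' B' l1" "bisects A B A' B' l2" and "l1 \<noteq> l2" "parallel l1 l2"
    and "\<exists>X \<in> {A, B, A', B'}. parallel l1 X"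
  shows "(parallel A A' \<and> parallel l1 A) \<or> (parallel B B' \<and> parallel l1 B)"
proof -
  have Qr: "quadrilateral B A B' A'" using quadrilateral_reflect[OF Q] .
  note side = parallel_bisectors_parallel_to_side[OF _ _ _ \<open>l1 \<noteq> l2\<close> \<open>parallel l1 l2\<close>]
  from assms(6) consider "parallel l1 A" | "parallel l1 A'" | "parallel l1 B" | "parallel l1 B'"
    by blast
  then show ?thesis
  proof cases
    case 1
    then show ?thesis using side[OF Q bis] by blast
  next
    case 2
    then have "parallel A' A"
      using side[OF quadrilateral_swap[OF Q] bisects_swap[THEN iffD2, OF bis(1)]
          bisects_swap[THEN iffD2, OF bis(2)]] by blast
    then show ?thesis using 2 by (metis parallel_sym parallel_trans)
  next
    case 3
    then show ?thesis
      using side[OF Qr bisects_reflect[THEN iffD2, OF bis(1)] bisects_reflect[THEN iffD2, OF bis(2)]]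
      by blast
  next
    case 4
    then have "parallel B' B"
      using side[OF quadrilateral_swap[OF Qr]
          bisects_swap[THEN iffD2, OF bisects_reflect[THEN iffD2, OF bis(1)]]
          bisects_swap[THEN iffD2, OF bisects_reflect[THEN iffD2, OF bis(2)]]] by blast
    then show ?thesis using 4 by (metis parallel_sym parallel_trans)
  qed
qed

lemma parallel_bisectors_parallel_pair:
  assumes Q: "quadrilateral A B A' B'" and two: "(2::'k::field) \<noteq> 0"
    and l1: "is_line (l1 :: ('k \<times> 'k) set)" and l2: "is_line l2" and "l1 \<noteq> l2" "parallel l1 l2"
    and bis: "bisects A B A' B' l1" "bisects A B A' B' l2"
  shows "(parallel A A' \<and> parallel l1 A) \<or> (parallel B B' \<and> parallel l1 B) \<or>
    (parallel (diag1 A B A' B') (diag2 A B A' B') \<and> parallel l1 (diag1 A B A' B'))"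
proof (cases "\<forall>X \<in> {A, B, A', B'}. \<not> parallel l1 X")
  case True
  note diag = transversal_parallel_bisectors_parallel_diag1[OF _ two l1 l2 \<open>l1 \<noteq> l2\<close> \<open>parallel l1 l2\<close>]
  have "parallel l1 (diag1 A B A' B')" using diag[OF Q True bis] .
  moreover have "parallel l1 (diag2 A B A' B')"
    using diag[OF quadrilateral_rotate[OF Q] _ bisects_rotate[THEN iffD2, OF bis(1)]
        bisects_rotate[THEN iffD2, OF bis(2)]] True
    unfolding diag_rotate(1) by blast
  ultimately show ?thesis by (metis parallel_sym parallel_trans)
next
  case False
  then show ?thesis
    using parallel_bisectors_parallel_to_side_pair[OF Q bis \<open>l1 \<noteq> l2\<close> \<open>parallel l1 l2\<close>] by blast
qed

lemma parallel_bisectors_iff: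
  assumes Q: "quadrilateral A B A' B'" and two: "(2::'k::field) \<noteq> 0"
    and l1: "is_line (l1 :: ('k \<times> 'k) set)" and l2: "is_line l2" and "l1 \<noteq> l2" "parallel l1 l2"
  shows "bisects A B A' B' l1 \<and> bisects A B A' B' l2 \<longleftrightarrow>
    (parallel A A' \<and> parallel l1 A) \<or> (parallel B B' \<and> parallel l1 B) \<or>
    (parallel (diag1 A B A' B') (diag2 A B A' B') \<and> parallel l1 (diag1 A B A' B'))"
    (is "_ \<longleftrightarrow> ?pair l1")
proof
  assume "?pair l1"
  moreover have "?pair l1 \<Longrightarrow> ?pair l2" using \<open>parallel l1 l2\<close> by (auto simp: parallel_def)
  ultimately show "bisects A B A' B' l1 \<and> bisects A B A' B' l2"
    using bisects_if_parallel_to_parallel_pair[OF Q two] l1 l2 by blast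
qed (use parallel_bisectors_parallel_pair[OF assms] in blast)

theorem proposition3p2:
  fixes A B A' B' :: "('k::field \<times> 'k) set"
  assumes char: "(2::'k) \<noteq> 0"
    and Q: "quadrilateral A B A' B'"
  shows
    "(\<forall>l. bisects A B A' B' l \<longrightarrow> (\<exists>p. midQ A B A' B' l = Fin p))
   \<and> (\<forall>l. is_line l \<and> (\<exists>v \<in> vertices A B A' B'. v \<in> l) \<longrightarrow>
          (bisects A B A' B' l \<longleftrightarrow>
             l \<in> {A, B, A', B', diag1 A B A' B', diag2 A B A' B'}))
   \<and> (\<forall>l1 l2. is_line l1 \<and> is_line l2 \<and> l1 \<noteq> l2 \<and> parallel l1 l2 \<longrightarrow>
          (bisects A B A' B' l1 \<and> bisects A B A' B' l2 \<longleftrightarrow>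
             (parallel A A' \<and> parallel l1 A) \<or> (parallel B B' \<and> parallel l1 B) \<or>
             (parallel (diag1 A B A' B') (diag2 A B A' B') \<and> parallel l1 (diag1 A B A' B'))))
   \<and> (\<forall>l. is_line l \<and>
          ((parallel A A' \<and> parallel l A) \<or> (parallel B B' \<and> parallel l B) \<or>
           (parallel (diag1 A B A' B') (diag2 A B A' B') \<and> parallel l (diag1 A B A' B')))
          \<longrightarrow> bisects A B A' B' l)"
proof (intro conjI allI impI)
  show "\<exists>p. midQ A B A' B' l = Fin p" if "bisects A B A' B' l" for l
    using bisects_midQ_finite[OF Q that] .
  show "bisects A B A' B' l \<longleftrightarrow> l \<in> {A, B, A', B', diag1 A B A' B', diag2 A B A' B'}"
    if "is_line l \<and> (\<exists>v \<in> vertices A B A' B'. v \<in> l)" for l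
    using bisects_through_vertex_iff[OF Q char] that by blast
  show "bisects A B A' B' l1 \<and> bisects A B A' B' l2 \<longleftrightarrow>
      (parallel A A' \<and> parallel l1 A) \<or> (parallel B B' \<and> parallel l1 B) \<or>
      (parallel (diag1 A B A' B') (diag2 A B A' B') \<and> parallel l1 (diag1 A B A' B'))"
    if "is_line l1 \<and> is_line l2 \<and> l1 \<noteq> l2 \<and> parallel l1 l2" for l1 l2
    using parallel_bisectors_iff[OF Q char] that by blast
  show "bisects A B A' B' l"
    if "is_line l \<and> ((parallel A A' \<and> parallel l A) \<or> (parallel B B' \<and> parallel l B) \<or>
      (parallel (diag1 A B A' B') (diag2 A B A' B') \<and> parallel l (diag1 A B A' B')))" for l
    using bisects_if_parallel_to_parallel_pair[OF Q char] that by blast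
qed

end
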